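(* Let $\mathbb{D}\subset\mathbb{C}$ be the unit disc and $\mathbb{B}_m\subset\mathbb{C}^m$ the unit ball. Let $F:\mathbb{D}\to\mathbb{B}_m$ be holomorphic, and suppose that for a point $\zeta$ with $|\zeta|=1$, $F$ extends to $\zeta$ with $\|F(\zeta)\|=1$ and $F$ is differentiable at $\zeta$. Then $$\|F'(\zeta)\|\ \ge\ \frac{2(1-\|F(0)\|)^2}{\,1-\|F(0)\|^2+\|F'(0)\|\,}.$$ Moreover, with $a=F(0)$, $$\|F'(\zeta)\|\ \ge\ \begin{cases}\dfrac{2(1-\|a\|)^2}{\,1-\|a\|^2+\sqrt{1-\|a\|^2}\,}, & m\ge 2,\\[2mm] \dfrac{1-|a|}{1+|a|}, & m=1.\end{cases}$$
   Context: $\|\cdot\|$ denotes the Euclidean norm on $\mathbb{C}^m$. *)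

theory Defs
  imports "HOL-Analysis.Analysis"
begin

end

(*
  Pairing F with u = F(zeta) gives a holomorphic self-map f = <F, u> of the disc with
  |f(zeta)| = 1, |f(0)| <= |F(0)|, |f'(0)| <= |F'(0)| and |f'(zeta)| <= |F'(zeta)|; since the
  bound 2 (1 - t)^2 / (1 - t^2 + s) decreases in t and s, the first inequality reduces to
  m = 1.  There, moving f(0) to 0 by a disc automorphism phi and applying the refined Schwarz
  lemma |h z| <= |z| (|z| + |h'(0)|) / (1 + |h'(0)| |z|) to phi o f bounds 1 - |f(r zeta)|^2,
  hence |f(r zeta) - f(zeta)| / (1 - r), from below; letting r -> 1 bounds |f'(zeta)|.
  The other two inequalities follow by bounding |F'(0)|: by 1 - |a|^2 via Schwarz-Pick when
  m = 1, and in general by sqrt (1 - |a|^2), applying the Schwarz lemma to the scalar maps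
  z -> <F z - a, c> / (1 - <F z, a>), which are components of the automorphism of the ball
  exchanging a and 0.
*)
theory Submission
  imports Defs "HOL-Complex_Analysis.Complex_Analysis"
begin

section \<open>Automorphisms of the unit disc\<close>

lemma Moebius_function_denom_nonzero:
  assumes "norm w < 1" "norm z \<le> 1"
  shows "1 - cnj w * z \<noteq> 0"
proof -
  have "norm w * norm z \<le> norm w"
    using assms by (simp add: mult_left_le)
  then have "norm (cnj w * z) < 1"
    using assms by (simp add: norm_mult)
  then show ?thesis by auto
qed

lemma one_minus_norm_Moebius_function_sq:
  assumes den: "1 - cnj w * z \<noteq> 0"
  shows "1 - norm (Moebius_function t w z) ^ 2
           = (1 - norm w ^ 2) * (1 - norm z ^ 2) / norm (1 - cnj w * z) ^ 2"
proof -
  have key: "norm (1 - cnj w * z) ^ 2 - norm (z - w) ^ 2 = (1 - norm w ^ 2) * (1 - norm z ^ 2)"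
    by (simp only: cmod_power2) (simp add: power2_eq_square algebra_simps)
  have "norm (Moebius_function t w z) = norm (z - w) / norm (1 - cnj w * z)"
    by (simp add: Moebius_function_def norm_mult norm_divide)
  then have "1 - norm (Moebius_function t w z) ^ 2
               = (norm (1 - cnj w * z) ^ 2 - norm (z - w) ^ 2) / norm (1 - cnj w * z) ^ 2"
    using den by (simp add: power_divide diff_divide_distrib)
  then show ?thesis
    by (simp only: key)
qed

lemma one_minus_norm_Moebius_function_sq_ge:
  assumes w: "norm w < 1" and z: "norm z \<le> 1"
  shows "(1 - norm w ^ 2) * (1 - norm z ^ 2) / (1 + norm w * norm z) ^ 2
           \<le> 1 - norm (Moebius_function t w z) ^ 2"
proof -
  have den: "1 - cnj w * z \<noteq> 0" using Moebius_function_denom_nonzero[OF w z] .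
  have "norm (1 - cnj w * z) \<le> 1 + norm w * norm z"
    using norm_triangle_ineq4[of 1 "cnj w * z"] by (simp add: norm_mult)
  then have "norm (1 - cnj w * z) ^ 2 \<le> (1 + norm w * norm z) ^ 2"
    by (simp add: power_mono)
  moreover have "0 \<le> (1 - norm w ^ 2) * (1 - norm z ^ 2)"
    using w z by (simp add: abs_square_le_1)
  moreover have "0 < norm (1 - cnj w * z) ^ 2" using den by simp
  ultimately show ?thesis
    unfolding one_minus_norm_Moebius_function_sq[OF den]
    by (intro divide_left_mono mult_pos_pos) auto
qed

lemma norm_Moebius_function_le:
  assumes c: "norm c < 1" and w: "norm w \<le> r" and r: "r \<le> 1"
  shows "norm (Moebius_function 0 (- c) w) \<le> (r + norm c) / (1 + norm c * r)"
proof -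
  have pos: "0 < 1 + norm c * norm w" by (simp add: add_pos_nonneg)
  have "1 - ((norm w + norm c) / (1 + norm c * norm w)) ^ 2
          = (1 - norm c ^ 2) * (1 - norm w ^ 2) / (1 + norm c * norm w) ^ 2"
  proof -
    have "(1 + norm c * norm w) ^ 2 - (norm w + norm c) ^ 2 = (1 - norm c ^ 2) * (1 - norm w ^ 2)"
      by (simp add: power2_eq_square algebra_simps)
    then show ?thesis
      using pos by (simp add: field_simps)
  qed
  also have "\<dots> \<le> 1 - norm (Moebius_function 0 (- c) w) ^ 2"
    using one_minus_norm_Moebius_function_sq_ge[of "- c" w 0] c w r by simp
  finally have "norm (Moebius_function 0 (- c) w) ^ 2
                  \<le> ((norm w + norm c) / (1 + norm c * norm w)) ^ 2"
    by linarith
  then have "norm (Moebius_function 0 (- c) w) \<le> (norm w + norm c) / (1 + norm c * norm w)"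
    by (rule power2_le_imp_le) (use pos in simp)
  also have "\<dots> \<le> (r + norm c) / (1 + norm c * r)"
  proof -
    have "0 \<le> (r - norm w) * (1 - norm c ^ 2)"
      using w c by (simp add: abs_square_le_1)
    then have "(norm w + norm c) * (1 + norm c * r) \<le> (r + norm c) * (1 + norm c * norm w)"
      by (simp add: algebra_simps power2_eq_square)
    moreover have "0 < 1 + norm c * r"
      using order_trans[OF norm_ge_zero w] by (simp add: add_pos_nonneg)
    ultimately show ?thesis
      using pos by (simp add: divide_simps)
  qed
  finally show ?thesis .
qed

lemma one_minus_cnj_mult_self: "1 - cnj w * w = of_real (1 - norm w ^ 2)"
  using complex_norm_square[of w] by (simp add: mult.commute)

lemma Moebius_function_has_field_derivative_at_center:
  assumes "norm w < 1"
  shows "(Moebius_function 0 w has_field_derivative 1 / of_real (1 - norm w ^ 2)) (at w)"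
proof -
  have den: "1 - cnj w * w \<noteq> 0"
    using Moebius_function_denom_nonzero assms by simp
  have "((\<lambda>z. (z - w) / (1 - cnj w * z)) has_field_derivative
          (1 * (1 - cnj w * w) - (w - w) * (- cnj w)) / (1 - cnj w * w) ^ 2) (at w)"
    using den by (auto intro!: derivative_eq_intros simp: power2_eq_square)
  then show ?thesis
    using den unfolding one_minus_cnj_mult_self[symmetric]
    by (simp add: Moebius_function_simple[abs_def] power2_eq_square)
qed

lemma Moebius_function_compose_self_map:
  assumes holf: "f holomorphic_on ball 0 1" and fmaps: "\<And>z. norm z < 1 \<Longrightarrow> norm (f z) < 1"
  defines "g \<equiv> \<lambda>z. Moebius_function 0 (f 0) (f z)"
  shows "g holomorphic_on ball 0 1" and "g 0 = 0" and "\<And>z. norm z < 1 \<Longrightarrow> norm (g z) < 1"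
    and "(f has_field_derivative d) (at 0)
           \<Longrightarrow> (g has_field_derivative d / of_real (1 - norm (f 0) ^ 2)) (at 0)"
proof -
  have b: "norm (f 0) < 1" using fmaps[of 0] by simp
  show "g holomorphic_on ball 0 1"
    unfolding g_def
    by (rule holomorphic_on_compose_gen[OF holf Moebius_function_holomorphic[OF b], unfolded o_def])
       (use fmaps in auto)
  show "g 0 = 0" by (simp add: g_def Moebius_function_eq_zero)
  show "norm (g z) < 1" if "norm z < 1" for z
    unfolding g_def using Moebius_function_norm_lt_1[OF b fmaps[OF that]] .
  show "(g has_field_derivative d / of_real (1 - norm (f 0) ^ 2)) (at 0)"
    if "(f has_field_derivative d) (at 0)"
    unfolding g_def
    using DERIV_chain2[OF Moebius_function_has_field_derivative_at_center[OF b] that] by simp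
qed

section \<open>Schwarz lemmas\<close>

lemma Schwarz_Lemma_has_field_derivative:
  assumes holh: "h holomorphic_on ball 0 1" and h0: "h 0 = 0"
    and hM: "\<And>z. norm z < 1 \<Longrightarrow> norm (h z) < M"
    and dh: "(h has_field_derivative d) (at 0)"
  shows "norm d \<le> M"
proof -
  have M: "M > 0" using hM[of 0] h0 by simp
  define g where "g z = h z / of_real M" for z
  have "g holomorphic_on ball 0 1"
    unfolding g_def[abs_def] using holh M by (intro holomorphic_intros) auto
  moreover have "g 0 = 0" by (simp add: g_def h0)
  moreover have "norm (g z) < 1" if "norm z < 1" for z
    using hM[OF that] M by (simp add: g_def norm_divide)
  ultimately have "norm (deriv g 0) \<le> 1"
    using Schwarz_Lemma(2)[of g 0] by simp
  moreover have "(g has_field_derivative d / of_real M) (at 0)"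
    unfolding g_def[abs_def] using dh M by (intro derivative_eq_intros) auto
  ultimately show ?thesis
    using M by (simp add: DERIV_imp_deriv norm_divide divide_le_eq)
qed

lemma Schwarz_Pick_has_field_derivative_0:
  assumes holf: "f holomorphic_on ball 0 1" and fmaps: "\<And>z. norm z < 1 \<Longrightarrow> norm (f z) < 1"
    and df: "(f has_field_derivative d) (at 0)"
  shows "norm d \<le> 1 - norm (f 0) ^ 2"
proof -
  have pos: "1 - norm (f 0) ^ 2 > 0"
    using fmaps[of 0] by (simp add: abs_square_less_1)
  have "norm (d / of_real (1 - norm (f 0) ^ 2)) \<le> 1"
    by (rule Schwarz_Lemma_has_field_derivative[OF Moebius_function_compose_self_map[OF holf fmaps]])
       (use df in auto)
  then show ?thesis
    using pos unfolding norm_divide norm_of_real by (simp add: divide_le_eq)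
qed

lemma Schwarz_quotient_norm_less_1:
  assumes holh: "h holomorphic_on ball 0 1" and h0: "h 0 = 0"
    and hlt: "\<And>z. norm z < 1 \<Longrightarrow> norm (h z) < 1" and dh: "norm (deriv h 0) < 1"
  obtains \<psi> where "\<psi> holomorphic_on ball 0 1" and "\<And>z. norm z < 1 \<Longrightarrow> h z = z * \<psi> z"
    and "\<psi> 0 = deriv h 0" and "\<And>z. norm z < 1 \<Longrightarrow> norm (\<psi> z) < 1"
proof -
  obtain \<psi> where hol: "\<psi> holomorphic_on ball 0 1" and h\<psi>: "\<And>z. norm z < 1 \<Longrightarrow> h z = z * \<psi> z"
    and \<psi>0: "deriv h 0 = \<psi> 0"
    using Schwarz3[OF holh h0] by blast
  have le: "norm (\<psi> z) \<le> 1" if "norm z < 1" for z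
  proof (cases "z = 0")
    case True
    then show ?thesis using dh \<psi>0 by simp
  next
    case False
    then show ?thesis
      using Schwarz_Lemma(1)[OF holh h0 hlt that] h\<psi>[OF that] by (simp add: norm_mult)
  qed
  have "norm (\<psi> z) < 1" if z: "norm z < 1" for z
  proof (rule ccontr)
    assume "\<not> norm (\<psi> z) < 1"
    then have "norm (\<psi> z) = 1" using le[OF z] by simp
    \<comment> \<open>maximum modulus principle\<close>
    moreover have "norm (\<psi> u) \<le> 1" if "norm (z - u) < 1 - norm z" for u
      using le norm_triangle_ineq2[of u z] that by (simp add: norm_minus_commute)
    ultimately have "\<psi> constant_on ball 0 1"
      using z by (intro Schwarz2[OF hol, of "1 - norm z" z]) (auto simp: ball_subset_ball_iff)
    then have "\<psi> 0 = \<psi> z"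
      using z by (auto simp: constant_on_def)
    then show False using dh \<psi>0 \<open>norm (\<psi> z) = 1\<close> by simp
  qed
  then show ?thesis using that hol h\<psi> \<psi>0 by auto
qed

lemma Schwarz_Lemma_refined:
  assumes holh: "h holomorphic_on ball 0 1" and h0: "h 0 = 0"
    and hlt: "\<And>z. norm z < 1 \<Longrightarrow> norm (h z) < 1" and z: "norm z < 1"
  shows "norm (h z) \<le> norm z * (norm z + norm (deriv h 0)) / (1 + norm (deriv h 0) * norm z)"
proof (cases "norm (deriv h 0) = 1")
  case True
  then obtain \<alpha> where "\<And>z. norm z < 1 \<Longrightarrow> h z = \<alpha> * z" "norm \<alpha> = 1"
    using Schwarz_Lemma(3)[OF holh h0 hlt z] by auto
  then have "norm (h z) = norm z"
    using z by (simp add: norm_mult)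
  moreover have "1 + norm z \<noteq> 0"
    using norm_ge_zero[of z] by linarith
  ultimately show ?thesis
    using True by (simp add: add.commute)
next
  case False
  define c where "c = deriv h 0"
  have c: "norm c < 1"
    using False Schwarz_Lemma(2)[OF holh h0 hlt z] by (simp add: c_def)
  obtain \<psi> where hol\<psi>: "\<psi> holomorphic_on ball 0 1" and h\<psi>: "\<And>z. norm z < 1 \<Longrightarrow> h z = z * \<psi> z"
    and \<psi>0: "\<psi> 0 = c" and \<psi>lt: "\<And>z. norm z < 1 \<Longrightarrow> norm (\<psi> z) < 1"
    using Schwarz_quotient_norm_less_1[OF holh h0 hlt] c by (auto simp: c_def)
  define g where "g w = Moebius_function 0 c (\<psi> w)" for w
  have "norm (g z) \<le> norm z"
    using Schwarz_Lemma(1)[OF Moebius_function_compose_self_map(1-3)[OF hol\<psi> \<psi>lt] z]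
    by (simp add: g_def \<psi>0)
  moreover have "\<psi> z = Moebius_function 0 (- c) (g z)"
    using Moebius_function_compose[of "- c" c "\<psi> z"] c \<psi>lt[OF z] by (simp add: g_def)
  ultimately have "norm (\<psi> z) \<le> (norm z + norm c) / (1 + norm c * norm z)"
    using norm_Moebius_function_le[OF c] z by simp
  then have "norm z * norm (\<psi> z) \<le> norm z * ((norm z + norm c) / (1 + norm c * norm z))"
    by (rule mult_left_mono) simp
  then show ?thesis
    using h\<psi>[OF z] by (simp add: norm_mult c_def)
qed

section \<open>A boundary Schwarz lemma for the disc\<close>

lemma one_minus_norm_sq_lower_bound:
  assumes holf: "f holomorphic_on ball 0 1" and fmaps: "\<And>z. norm z < 1 \<Longrightarrow> norm (f z) < 1"
    and df: "(f has_field_derivative d) (at 0)" and z: "norm z < 1"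
  defines "k \<equiv> norm d / (1 - norm (f 0) ^ 2)"
  defines "\<rho> \<equiv> norm z * (norm z + k) / (1 + k * norm z)"
  shows "(1 - norm (f 0)) / (1 + norm (f 0)) * ((1 - \<rho>) * (1 + \<rho>)) \<le> 1 - norm (f z) ^ 2"
proof -
  define b where "b = f 0"
  define \<Phi> where "\<Phi> = (\<lambda>z. Moebius_function 0 b (f z))"
  have b: "norm b < 1" using fmaps[of 0] by (simp add: b_def)
  have b2: "0 < 1 - norm b ^ 2" using b by (simp add: abs_square_less_1)
  have \<Phi>: "\<Phi> holomorphic_on ball 0 1" "\<Phi> 0 = 0" "\<And>z. norm z < 1 \<Longrightarrow> norm (\<Phi> z) < 1"
    "(\<Phi> has_field_derivative d / of_real (1 - norm b ^ 2)) (at 0)"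
    using Moebius_function_compose_self_map[OF holf fmaps] df by (simp_all add: \<Phi>_def b_def)
  have "deriv \<Phi> 0 = d / of_real (1 - norm b ^ 2)"
    using \<Phi>(4) by (rule DERIV_imp_deriv)
  then have "norm (deriv \<Phi> 0) = k"
    using b2 by (simp add: k_def b_def norm_divide del: of_real_diff of_real_power)
  then have \<Phi>z: "norm (\<Phi> z) \<le> \<rho>"
    using Schwarz_Lemma_refined[OF \<Phi>(1-3) z] by (simp add: \<rho>_def)
  have \<Phi>1: "norm (\<Phi> z) < 1" using \<Phi>(3)[OF z] .
  have fz: "f z = Moebius_function 0 (- b) (\<Phi> z)"
    using Moebius_function_compose[of "- b" b "f z"] b fmaps[OF z] by (simp add: \<Phi>_def)
  have "(1 - norm b) / (1 + norm b) * ((1 - \<rho>) * (1 + \<rho>))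
          = (1 - norm b ^ 2) * (1 - \<rho> ^ 2) / (1 + norm b) ^ 2"
    by (simp add: divide_simps power2_eq_square) (simp add: algebra_simps)
  also have "\<dots> \<le> (1 - norm b ^ 2) * (1 - norm (\<Phi> z) ^ 2) / (1 + norm b * norm (\<Phi> z)) ^ 2"
  proof (rule frac_le)
    show "0 \<le> (1 - norm b ^ 2) * (1 - norm (\<Phi> z) ^ 2)"
      using less_imp_le[OF b] less_imp_le[OF \<Phi>1]
      by (intro mult_nonneg_nonneg) (simp_all add: abs_square_le_1)
    show "(1 - norm b ^ 2) * (1 - \<rho> ^ 2) \<le> (1 - norm b ^ 2) * (1 - norm (\<Phi> z) ^ 2)"
      using b2 \<Phi>z by (intro mult_left_mono) (auto intro: power_mono)
    show "0 < (1 + norm b * norm (\<Phi> z)) ^ 2"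
      by (intro zero_less_power add_pos_nonneg) simp_all
    show "(1 + norm b * norm (\<Phi> z)) ^ 2 \<le> (1 + norm b) ^ 2"
      using \<Phi>1 by (intro power_mono) (auto simp: mult_left_le)
  qed
  also have "\<dots> \<le> 1 - norm (f z) ^ 2"
    unfolding fz using one_minus_norm_Moebius_function_sq_ge[of "- b" "\<Phi> z" 0] b \<Phi>1 by simp
  finally show ?thesis by (simp add: b_def)
qed

lemma radial_limit_le_norm_deriv:
  fixes f :: "complex \<Rightarrow> complex"
  assumes \<zeta>: "norm \<zeta> = 1" and df: "(f has_field_derivative d) (at \<zeta> within ball 0 1)"
    and H: "(H \<longlongrightarrow> L) (at_left 1)"
    and le: "\<And>r. 0 < r \<Longrightarrow> r < 1 \<Longrightarrow> H r \<le> norm (f (of_real r * \<zeta>) - f \<zeta>) / (1 - r)"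
  shows "L \<le> norm d"
proof -
  have ev: "\<forall>\<^sub>F r in at_left 1. 0 < r \<and> r < (1::real)"
    using eventually_at_left_real[of 0 "1::real"] by simp
  have radius: "filterlim (\<lambda>r. of_real r * \<zeta>) (at \<zeta> within ball 0 1) (at_left 1)"
    unfolding filterlim_at
  proof
    have "((\<lambda>r. of_real r * \<zeta>) \<longlongrightarrow> of_real 1 * \<zeta>) (at_left 1)"
      by (intro tendsto_intros)
    then show "((\<lambda>r. of_real r * \<zeta>) \<longlongrightarrow> \<zeta>) (at_left 1)" by simp
    show "\<forall>\<^sub>F r in at_left 1. of_real r * \<zeta> \<in> ball 0 1 \<and> of_real r * \<zeta> \<noteq> \<zeta>"
      using ev by eventually_elim (use \<zeta> in \<open>auto simp: norm_mult\<close>)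
  qed
  have "((\<lambda>y. (f y - f \<zeta>) / (y - \<zeta>)) \<longlongrightarrow> d) (at \<zeta> within ball 0 1)"
    using df by (simp add: has_field_derivative_iff)
  then have "((\<lambda>r. norm ((f (of_real r * \<zeta>) - f \<zeta>) / (of_real r * \<zeta> - \<zeta>))) \<longlongrightarrow> norm d) (at_left 1)"
    by (intro tendsto_norm filterlim_compose[OF _ radius])
  moreover have "norm ((f (of_real r * \<zeta>) - f \<zeta>) / (of_real r * \<zeta> - \<zeta>))
                   = norm (f (of_real r * \<zeta>) - f \<zeta>) / (1 - r)" if "r < 1" for r
  proof -
    have "of_real r * \<zeta> - \<zeta> = - (of_real (1 - r) * \<zeta>)" by (simp add: algebra_simps)
    then show ?thesis using that \<zeta> by (simp add: norm_divide norm_mult del: of_real_diff)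
  qed
  ultimately show "L \<le> norm d"
    using H le ev by (intro tendsto_le[OF trivial_limit_at_left_real]) (auto elim!: eventually_mono)
qed

definition boundary_deriv_bound :: "real \<Rightarrow> real \<Rightarrow> real" where
  "boundary_deriv_bound t s = 2 * (1 - t) ^ 2 / (1 - t ^ 2 + s)"

lemma boundary_deriv_bound_antimono:
  assumes "0 \<le> t1" "t1 \<le> t2" "t2 < 1" "0 \<le> s1" "s1 \<le> s2"
  shows "boundary_deriv_bound t2 s2 \<le> boundary_deriv_bound t1 s1"
proof -
  have eq: "boundary_deriv_bound t s = 2 * (1 - t) / ((1 + t) + s / (1 - t))"
    if "t < 1" for t s :: real
    using that by (simp add: boundary_deriv_bound_def divide_simps power2_eq_square)
      (simp add: algebra_simps)
  have "s1 / (1 - t1) \<le> s2 / (1 - t2)"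
    by (rule frac_le) (use assms in auto)
  moreover have "0 \<le> s1 / (1 - t1)" using assms by simp
  ultimately have "2 * (1 - t2) / ((1 + t2) + s2 / (1 - t2))
                     \<le> 2 * (1 - t1) / ((1 + t1) + s1 / (1 - t1))"
    using assms by (intro frac_le) (auto simp: add_pos_nonneg)
  then show ?thesis using assms by (simp add: eq)
qed

lemma boundary_deriv_bound_one_minus_sq:
  assumes "t < 1"
  shows "boundary_deriv_bound t (1 - t ^ 2) = (1 - t) / (1 + t)"
proof -
  have "boundary_deriv_bound t (1 - t ^ 2) = (2 * (1 - t) * (1 - t)) / (2 * (1 - t) * (1 + t))"
    by (simp add: boundary_deriv_bound_def power2_eq_square algebra_simps)
  also have "\<dots> = (1 - t) / (1 + t)"
    using assms by (simp only: mult.assoc mult_divide_mult_cancel_left)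
  finally show ?thesis .
qed

lemma boundary_Schwarz_Lemma:
  assumes holf: "f holomorphic_on ball 0 1" and fmaps: "\<And>z. norm z < 1 \<Longrightarrow> norm (f z) < 1"
    and \<zeta>: "norm \<zeta> = 1" and f\<zeta>: "norm (f \<zeta>) = 1"
    and d\<zeta>: "(f has_field_derivative d) (at \<zeta> within ball 0 1)"
    and d0: "(f has_field_derivative d0) (at 0)"
  shows "boundary_deriv_bound (norm (f 0)) (norm d0) \<le> norm d"
proof -
  define b where "b = norm (f 0)"
  define k where "k = norm d0 / (1 - b ^ 2)"
  define K where "K = (1 - b) / (1 + b)"
  \<comment> \<open>\<open>k\<close> is the modulus of the derivative at 0 of the recentred map, so \<open>\<rho> r\<close> bounds
    its modulus on the circle of radius \<open>r\<close> by the refined Schwarz lemma\<close>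
  define \<rho> where "\<rho> r = r * (r + k) / (1 + k * r)" for r :: real
  define H where "H r = K * (1 + r) * (1 + \<rho> r) / (2 * (1 + k * r))" for r :: real
  have b: "0 \<le> b" "b < 1" using fmaps[of 0] by (auto simp: b_def)
  have k: "0 \<le> k" using b by (simp add: k_def abs_square_le_1)
  have "H r \<le> norm (f (of_real r * \<zeta>) - f \<zeta>) / (1 - r)" if r: "0 < r" "r < 1" for r
  proof -
    define z where "z = of_real r * \<zeta>"
    have z: "norm z = r" using r \<zeta> by (simp add: z_def norm_mult)
    have pos: "0 < 1 + k * r" using r k by (simp add: add_pos_nonneg)
    have \<rho>: "1 - \<rho> r = (1 - r) * (1 + r) / (1 + k * r)"
      using pos by (simp add: \<rho>_def divide_simps) (simp add: algebra_simps)
    have "(1 - r) * (2 * H r) = K * ((1 - \<rho> r) * (1 + \<rho> r))"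
      unfolding H_def \<rho> using pos by (simp add: field_simps)
    also have "\<dots> \<le> 1 - norm (f z) ^ 2"
      using one_minus_norm_sq_lower_bound[OF holf fmaps d0, of z] r z
      by (simp add: K_def \<rho>_def k_def b_def)
    also have "\<dots> \<le> 2 * norm (f z - f \<zeta>)"
    proof -
      have "1 - norm (f z) ^ 2 \<le> 2 * (1 - norm (f z))"
        using zero_le_power2[of "1 - norm (f z)"] by (simp add: power2_eq_square algebra_simps)
      also have "1 - norm (f z) \<le> norm (f z - f \<zeta>)"
        using norm_triangle_ineq2[of "f \<zeta>" "f z"] f\<zeta> by (simp add: norm_minus_commute)
      finally show ?thesis by simp
    qed
    finally show ?thesis
      using r by (simp add: z_def pos_le_divide_eq mult.commute)
  qed
  moreover have "(H \<longlongrightarrow> H 1) (at_left 1)"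
    unfolding H_def[abs_def] \<rho>_def using k by (intro tendsto_intros) (auto simp: add_nonneg_eq_0_iff)
  ultimately have "H 1 \<le> norm d"
    using radial_limit_le_norm_deriv[OF \<zeta> d\<zeta>] by blast
  moreover have "H 1 = boundary_deriv_bound b (norm d0)"
  proof -
    have b2: "0 < 1 - b ^ 2" using b by (simp add: abs_square_less_1)
    have "H 1 = 2 * K / (1 + k)"
      using k by (simp add: H_def \<rho>_def field_simps)
    also have "\<dots> = 2 * (K * (1 - b ^ 2)) / (1 - b ^ 2 + norm d0)"
      using b2 by (simp add: k_def field_simps)
    also have "K * (1 - b ^ 2) = (1 - b) ^ 2"
      using b by (simp add: K_def power2_eq_square field_simps)
    finally show ?thesis by (simp add: boundary_deriv_bound_def)
  qed
  ultimately show ?thesis by (simp add: b_def)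
qed

section \<open>Holomorphic maps into the unit ball of complex n-space\<close>

definition cinner :: "complex ^ 'n \<Rightarrow> complex ^ 'n \<Rightarrow> complex" where
  "cinner x y = (\<Sum>i\<in>UNIV. x $ i * cnj (y $ i))"

lemma cinner_self: "cinner x x = of_real (norm x ^ 2)"
proof -
  have "norm x ^ 2 = (\<Sum>i\<in>UNIV. norm (x $ i) ^ 2)"
    by (simp add: norm_vec_def L2_set_def sum_nonneg)
  then show ?thesis
    by (simp add: cinner_def flip: complex_norm_square)
qed

lemma norm_cinner_le: "norm (cinner x y) \<le> norm x * norm y"
proof -
  have "norm (cinner x y) \<le> (\<Sum>i\<in>UNIV. norm (x $ i) * norm (y $ i))"
    unfolding cinner_def using norm_sum[of "\<lambda>i. x $ i * cnj (y $ i)" UNIV] by (simp add: norm_mult)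
  also have "\<dots> \<le> L2_set (\<lambda>i. norm (x $ i)) UNIV * L2_set (\<lambda>i. norm (y $ i)) UNIV"
    using L2_set_mult_ineq[of "\<lambda>i. norm (x $ i)" "\<lambda>i. norm (y $ i)" UNIV] by simp
  finally show ?thesis by (simp add: norm_vec_def)
qed

lemma cinner_commute: "cnj (cinner x y) = cinner y x"
  by (simp add: cinner_def mult.commute)

lemma cinner_add_left: "cinner (x + y) z = cinner x z + cinner y z"
  by (simp add: cinner_def sum.distrib algebra_simps)

lemma cinner_add_right: "cinner z (x + y) = cinner z x + cinner z y"
  by (simp add: cinner_def sum.distrib algebra_simps)

lemma cinner_diff_left: "cinner (x - y) z = cinner x z - cinner y z"
  by (simp add: cinner_def sum_subtractf algebra_simps)

lemma cinner_diff_right: "cinner z (x - y) = cinner z x - cinner z y"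
  by (simp add: cinner_def sum_subtractf algebra_simps)

lemma cinner_scale_left: "cinner (c *s x) y = c * cinner x y"
  by (simp add: cinner_def sum_distrib_left algebra_simps)

lemma cinner_scale_right: "cinner x (c *s y) = cnj c * cinner x y"
  by (simp add: cinner_def sum_distrib_left algebra_simps)

lemmas cinner_simps = cinner_add_left cinner_add_right cinner_diff_left cinner_diff_right
  cinner_scale_left cinner_scale_right

lemma has_field_derivative_cinner_left:
  fixes F :: "complex \<Rightarrow> complex ^ 'n"
  assumes "\<And>i. ((\<lambda>z. F z $ i) has_field_derivative D $ i) (at z within S)"
  shows "((\<lambda>z. cinner (F z) c) has_field_derivative cinner D c) (at z within S)"
  unfolding cinner_def by (intro DERIV_sum DERIV_cmult_right assms)

lemma holomorphic_on_cinner_left: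
  fixes F :: "complex \<Rightarrow> complex ^ 'n"
  assumes "\<And>i. (\<lambda>z. F z $ i) holomorphic_on S"
  shows "(\<lambda>z. cinner (F z) c) holomorphic_on S"
  unfolding cinner_def by (intro holomorphic_intros assms)

text \<open>
  For \<open>s = sqrt (1 - norm a ^ 2)\<close> this is \<open>P + s (1 - P)\<close>, with \<open>P\<close> the orthogonal
  projection onto \<open>a\<close>.  The automorphism of the ball exchanging \<open>a\<close> and \<open>0\<close> is
  \<open>\<phi> x = - Moebius_linear s a (x - a) / (1 - cinner x a)\<close>, so that
  \<open>norm_Moebius_linear_diff_sq\<close> below is the identity
  \<open>1 - |\<phi> x|^2 = (1 - |a|^2) (1 - |x|^2) / |1 - cinner x a|^2\<close>.
\<close>

definition Moebius_linear :: "real \<Rightarrow> complex ^ 'n \<Rightarrow> complex ^ 'n \<Rightarrow> complex ^ 'n" where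
  "Moebius_linear s a y = of_real s *s y + (cinner y a / of_real (1 + s)) *s a"

lemma cinner_Moebius_linear_left:
  "cinner (Moebius_linear s a y) w = cinner y (Moebius_linear s a w)"
  by (simp add: Moebius_linear_def cinner_simps cinner_commute)

lemma norm_Moebius_linear_sq:
  assumes s: "0 \<le> s" "s ^ 2 = 1 - norm a ^ 2"
  shows "norm (Moebius_linear s a y) ^ 2 = s ^ 2 * norm y ^ 2 + norm (cinner y a) ^ 2"
proof -
  define S where "S = complex_of_real s"
  define \<mu> where "\<mu> = cinner y a"
  have "Re (1 + S) > 0"
    using s by (simp add: S_def)
  then have S: "1 + S \<noteq> 0" by (metis less_irrefl zero_complex.sel(1))
  have T: "Moebius_linear s a y = S *s y + (\<mu> / (1 + S)) *s a"
    by (simp add: Moebius_linear_def S_def \<mu>_def)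
  have "norm a ^ 2 = 1 - s ^ 2" using s(2) by simp
  then have aa: "cinner a a = 1 - S ^ 2"
    unfolding cinner_self by (simp add: S_def)
  have "of_real (norm (Moebius_linear s a y) ^ 2)
          = cinner (Moebius_linear s a y) (Moebius_linear s a y)"
    by (rule cinner_self[symmetric])
  also have "\<dots> = S * (S * cinner y y + \<mu> * cnj \<mu> / (1 + S))
                 + cnj \<mu> * (S * \<mu> + \<mu> * (1 - S ^ 2) / (1 + S)) / (1 + S)"
  proof -
    have "cnj S = S" "cinner y a = \<mu>" "cinner a y = cnj \<mu>"
      by (simp_all add: S_def \<mu>_def cinner_commute)
    then show ?thesis
      unfolding T cinner_simps aa by simp
  qed
  also have "\<dots> = S ^ 2 * cinner y y + \<mu> * cnj \<mu>"
  proof -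
    define c where "c = 1 / (1 + S)"
    have "(1 + S) * c = 1"
      using S by (simp add: c_def)
    then have "S * (S * cinner y y + \<mu> * cnj \<mu> * c) + cnj \<mu> * (S * \<mu> + \<mu> * (1 - S ^ 2) * c) * c
                 = S ^ 2 * cinner y y + \<mu> * cnj \<mu>"
      by algebra
    then show ?thesis
      by (simp add: c_def divide_inverse)
  qed
  also have "\<dots> = of_real (s ^ 2 * norm y ^ 2 + norm \<mu> ^ 2)"
    by (simp add: S_def cinner_self flip: complex_norm_square)
  finally show ?thesis
    by (simp only: of_real_eq_iff \<mu>_def)
qed

lemma norm_Moebius_linear_diff_sq:
  assumes s: "0 \<le> s" "s ^ 2 = 1 - norm a ^ 2"
  shows "norm (Moebius_linear s a (x - a)) ^ 2
           = norm (1 - cinner x a) ^ 2 - s ^ 2 * (1 - norm x ^ 2)"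
proof -
  define \<mu> where "\<mu> = cinner x a"
  have "of_real (norm (x - a) ^ 2) = of_real (norm x ^ 2) - \<mu> - cnj \<mu> + of_real (norm a ^ 2)"
    unfolding cinner_self[symmetric] by (simp add: cinner_simps \<mu>_def cinner_commute)
  from arg_cong[OF this, of Re]
  have xa: "norm (x - a) ^ 2 = norm x ^ 2 - 2 * Re \<mu> + norm a ^ 2"
    by simp
  have "cinner (x - a) a = \<mu> - of_real (norm a ^ 2)"
    by (simp add: cinner_simps cinner_self \<mu>_def)
  then have "norm (Moebius_linear s a (x - a)) ^ 2
               = s ^ 2 * (norm x ^ 2 - 2 * Re \<mu> + norm a ^ 2) + ((Re \<mu> - norm a ^ 2) ^ 2 + Im \<mu> ^ 2)"
    using norm_Moebius_linear_sq[OF s, of "x - a"] xa by (simp add: cmod_power2)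
  also have "\<dots> = ((1 - Re \<mu>) ^ 2 + Im \<mu> ^ 2) - s ^ 2 * (1 - norm x ^ 2)"
  proof -
    have a: "norm a ^ 2 = 1 - s ^ 2" using s(2) by simp
    show ?thesis unfolding a by (simp add: power2_eq_square algebra_simps)
  qed
  also have "(1 - Re \<mu>) ^ 2 + Im \<mu> ^ 2 = norm (1 - \<mu>) ^ 2"
    by (simp add: cmod_power2)
  finally show ?thesis by (simp add: \<mu>_def)
qed

lemma norm_Moebius_linear_diff_less:
  assumes s: "0 < s" "s ^ 2 = 1 - norm a ^ 2" and x: "norm x < 1"
  shows "norm (Moebius_linear s a (x - a)) < norm (1 - cinner x a)"
proof -
  have "0 < s ^ 2 * (1 - norm x ^ 2)"
    using s(1) x by (intro mult_pos_pos) (simp_all add: abs_square_less_1)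
  then have "norm (Moebius_linear s a (x - a)) ^ 2 < norm (1 - cinner x a) ^ 2"
    using norm_Moebius_linear_diff_sq[of s a x] s by simp
  then show ?thesis
    by (rule power_less_imp_less_base) simp
qed

lemma norm_Moebius_linear_deriv_0_le:
  fixes F :: "complex \<Rightarrow> complex ^ 'n"
  assumes holF: "\<And>i. (\<lambda>z. F z $ i) holomorphic_on ball 0 1"
    and Fmaps: "\<And>z. norm z < 1 \<Longrightarrow> norm (F z) < 1"
    and dF: "\<And>i. ((\<lambda>z. F z $ i) has_field_derivative D $ i) (at 0)"
    and s: "0 < s" "s ^ 2 = 1 - norm (F 0) ^ 2"
  shows "norm (Moebius_linear s (F 0) D) \<le> s ^ 2"
proof (cases "Moebius_linear s (F 0) D = 0")
  case True
  then show ?thesis by simp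
next
  case False
  define a where "a = F 0"
  define y where "y = Moebius_linear s a D"
  define c where "c = Moebius_linear s a y"
  define g where "g z = (cinner (F z) c - cinner a c) / (1 - cinner (F z) a)" for z
  have y: "y \<noteq> 0" using False by (simp add: y_def a_def)
  have den: "1 - cinner (F z) a \<noteq> 0" if "norm z < 1" for z
  proof -
    have "norm (cinner (F z) a) \<le> norm (F z) * norm a"
      by (rule norm_cinner_le)
    also have "\<dots> \<le> norm (F z)"
      using Fmaps[of 0] by (simp add: a_def mult_left_le)
    also have "\<dots> < 1"
      using Fmaps[OF that] .
    finally show ?thesis by auto
  qed
  have "g holomorphic_on ball 0 1"
    unfolding g_def using den
    by (intro holomorphic_intros holomorphic_on_cinner_left holF) auto
  moreover have "g 0 = 0" by (simp add: g_def a_def)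
  moreover have "norm (g z) < norm y" if z: "norm z < 1" for z
  proof -
    have "norm (cinner (F z) c - cinner a c) = norm (cinner (Moebius_linear s a (F z - a)) y)"
      by (simp add: c_def cinner_Moebius_linear_left cinner_diff_left)
    also have "\<dots> \<le> norm (Moebius_linear s a (F z - a)) * norm y"
      by (rule norm_cinner_le)
    also have "\<dots> < norm (1 - cinner (F z) a) * norm y"
      using norm_Moebius_linear_diff_less[OF s[folded a_def] Fmaps[OF z]] y by simp
    finally show ?thesis
      using den[OF z] by (simp add: g_def norm_divide divide_less_eq mult.commute)
  qed
  moreover have "(g has_field_derivative cinner D c / (1 - cinner a a)) (at 0)"
  proof -
    have "(g has_field_derivative
            ((cinner D c - 0) * (1 - cinner (F 0) a) - (cinner (F 0) c - cinner a c) * (0 - cinner D a))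
              / ((1 - cinner (F 0) a) * (1 - cinner (F 0) a))) (at 0)"
      unfolding g_def using den[of 0] dF
      by (intro DERIV_divide DERIV_diff has_field_derivative_cinner_left DERIV_const) auto
    then show ?thesis
      using den[of 0] by (simp add: a_def)
  qed
  ultimately have "norm (cinner D c / (1 - cinner a a)) \<le> norm y"
    by (rule Schwarz_Lemma_has_field_derivative)
  moreover have "cinner D c = of_real (norm y ^ 2)"
    by (simp add: c_def y_def cinner_Moebius_linear_left[symmetric] cinner_self)
  moreover have "1 - cinner a a = of_real (s ^ 2)"
    using s(2) by (simp add: cinner_self a_def)
  ultimately have "norm y ^ 2 / s ^ 2 \<le> norm y"
    by (simp add: norm_divide del: of_real_power)
  then have "norm y * norm y \<le> s ^ 2 * norm y"
    using s(1) by (simp add: divide_le_eq power2_eq_square mult.commute)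
  then have "norm y \<le> s ^ 2"
    using y by simp
  then show ?thesis
    by (simp add: y_def a_def)
qed

lemma norm_deriv_0_le_sqrt:
  fixes F :: "complex \<Rightarrow> complex ^ 'n"
  assumes holF: "\<And>i. (\<lambda>z. F z $ i) holomorphic_on ball 0 1"
    and Fmaps: "\<And>z. norm z < 1 \<Longrightarrow> norm (F z) < 1"
    and dF: "\<And>i. ((\<lambda>z. F z $ i) has_field_derivative D $ i) (at 0)"
  shows "norm D \<le> sqrt (1 - norm (F 0) ^ 2)"
proof -
  define s where "s = sqrt (1 - norm (F 0) ^ 2)"
  have s2: "s ^ 2 = 1 - norm (F 0) ^ 2"
    using Fmaps[of 0] by (simp add: s_def abs_square_le_1)
  have s: "0 < s"
    using Fmaps[of 0] by (simp add: s_def abs_square_less_1)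
  have "s ^ 2 * norm D ^ 2 \<le> norm (Moebius_linear s (F 0) D) ^ 2"
    using norm_Moebius_linear_sq[of s "F 0" D] s s2 by simp
  also have "\<dots> \<le> (s ^ 2) ^ 2"
    using norm_Moebius_linear_deriv_0_le[OF holF Fmaps dF s s2] by (intro power_mono) auto
  also have "\<dots> = s ^ 2 * s ^ 2"
    by (simp add: power2_eq_square)
  finally have "norm D ^ 2 \<le> s ^ 2"
    by (rule mult_left_le_imp_le) (use s in simp)
  then have "norm D \<le> s"
    by (rule power2_le_imp_le) (use s in simp)
  then show ?thesis
    by (simp add: s_def)
qed

lemma boundary_Schwarz_Lemma_ball:
  fixes F :: "complex \<Rightarrow> complex ^ 'n"
  assumes holF: "\<And>i. (\<lambda>z. F z $ i) holomorphic_on ball 0 1"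
    and Fmaps: "\<And>z. norm z < 1 \<Longrightarrow> norm (F z) < 1"
    and \<zeta>: "norm \<zeta> = 1" and F\<zeta>: "norm (F \<zeta>) = 1"
    and d\<zeta>: "\<And>i. ((\<lambda>z. F z $ i) has_field_derivative D\<zeta> $ i) (at \<zeta> within ball 0 1)"
    and d0: "\<And>i. ((\<lambda>z. F z $ i) has_field_derivative D0 $ i) (at 0)"
  shows "boundary_deriv_bound (norm (F 0)) (norm D0) \<le> norm D\<zeta>"
proof -
  define u where "u = F \<zeta>"
  define f where "f z = cinner (F z) u" for z
  have norm_f: "norm (f z) \<le> norm (F z)" for z
    using norm_cinner_le[of "F z" u] F\<zeta> by (simp add: f_def u_def)
  have "boundary_deriv_bound (norm (F 0)) (norm D0)
          \<le> boundary_deriv_bound (norm (f 0)) (norm (cinner D0 u))"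
    using norm_f[of 0] Fmaps[of 0] norm_cinner_le[of D0 u] F\<zeta>
    by (intro boundary_deriv_bound_antimono) (auto simp: u_def)
  also have "\<dots> \<le> norm (cinner D\<zeta> u)"
  proof -
    have "f holomorphic_on ball 0 1"
      unfolding f_def[abs_def] by (rule holomorphic_on_cinner_left[OF holF])
    moreover have "norm (f z) < 1" if "norm z < 1" for z
      using norm_f[of z] Fmaps[OF that] by simp
    moreover have "norm (f \<zeta>) = 1"
      using F\<zeta> by (simp add: f_def u_def cinner_self)
    moreover have "(f has_field_derivative cinner D\<zeta> u) (at \<zeta> within ball 0 1)"
      unfolding f_def[abs_def] by (rule has_field_derivative_cinner_left[OF d\<zeta>])
    moreover have "(f has_field_derivative cinner D0 u) (at 0)"
      unfolding f_def[abs_def] by (rule has_field_derivative_cinner_left[OF d0])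
    ultimately show ?thesis
      using boundary_Schwarz_Lemma[of f \<zeta>] \<zeta> by blast
  qed
  also have "\<dots> \<le> norm D\<zeta>"
    using norm_cinner_le[of D\<zeta> u] F\<zeta> by (simp add: u_def)
  finally show ?thesis .
qed

lemma norm_vec_card_1:
  fixes x :: "'a::real_normed_vector ^ 'n"
  assumes "CARD('n) = 1"
  shows "norm x = norm (x $ i)"
proof -
  have UNIV: "UNIV = {i}"
    using assms by (metis UNIV_I card_1_singletonE singletonD)
  show ?thesis
    unfolding norm_vec_def L2_set_def UNIV by simp
qed

lemma norm_deriv_0_le_card_1:
  fixes F :: "complex \<Rightarrow> complex ^ 'n"
  assumes n: "CARD('n) = 1"
    and holF: "\<And>i. (\<lambda>z. F z $ i) holomorphic_on ball 0 1"
    and Fmaps: "\<And>z. norm z < 1 \<Longrightarrow> norm (F z) < 1"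
    and dF: "\<And>i. ((\<lambda>z. F z $ i) has_field_derivative D $ i) (at 0)"
  shows "norm D \<le> 1 - norm (F 0) ^ 2"
proof -
  fix i :: 'n
  have "norm (F z $ i) < 1" if "norm z < 1" for z
    using Fmaps[OF that] norm_vec_card_1[OF n, of "F z" i] by simp
  then have "norm (D $ i) \<le> 1 - norm (F 0 $ i) ^ 2"
    by (rule Schwarz_Pick_has_field_derivative_0[OF holF _ dF])
  then show ?thesis
    by (metis norm_vec_card_1[OF n])
qed

theorem theorem2p4:
  fixes F :: "complex \<Rightarrow> complex ^ 'm" and \<zeta> :: complex
    and D0 D\<zeta> :: "complex ^ 'm"
  assumes holo: "\<And>i. (\<lambda>z. F z $ i) holomorphic_on ball 0 1"
    and maps: "F ` ball 0 1 \<subseteq> ball 0 1"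
    and bdry: "norm \<zeta> = 1"
    and Fzeta: "norm (F \<zeta>) = 1"
    and d\<zeta>: "\<And>i. ((\<lambda>z. F z $ i) has_field_derivative (D\<zeta> $ i)) (at \<zeta> within ball 0 1)"
    and d0: "\<And>i. ((\<lambda>z. F z $ i) has_field_derivative (D0 $ i)) (at 0)"
  shows "norm D\<zeta> \<ge> 2 * (1 - norm (F 0))^2 / (1 - (norm (F 0))^2 + norm D0)
         \<and> (CARD('m) \<ge> 2 \<longrightarrow>
           norm D\<zeta> \<ge> 2 * (1 - norm (F 0))^2 / (1 - (norm (F 0))^2 + sqrt (1 - (norm (F 0))^2)))
         \<and> (CARD('m) = 1 \<longrightarrow> norm D\<zeta> \<ge> (1 - norm (F 0)) / (1 + norm (F 0)))"
proof -
  have Fmaps: "norm (F z) < 1" if "norm z < 1" for z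
    using maps that by (auto simp: image_subset_iff)
  have a: "0 \<le> norm (F 0)" "norm (F 0) < 1"
    using Fmaps[of 0] by auto
  have bound: "boundary_deriv_bound (norm (F 0)) (norm D0) \<le> norm D\<zeta>"
    by (rule boundary_Schwarz_Lemma_ball[OF holo Fmaps bdry Fzeta d\<zeta> d0])
  moreover have "boundary_deriv_bound (norm (F 0)) (sqrt (1 - norm (F 0) ^ 2)) \<le> norm D\<zeta>"
    using norm_deriv_0_le_sqrt[OF holo Fmaps d0] a
    by (intro order_trans[OF boundary_deriv_bound_antimono bound]) auto
  moreover have "(1 - norm (F 0)) / (1 + norm (F 0)) \<le> norm D\<zeta>" if "CARD('m) = 1"
    using norm_deriv_0_le_card_1[OF that holo Fmaps d0] a
      boundary_deriv_bound_one_minus_sq[of "norm (F 0)"]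
    by (metis order_trans[OF boundary_deriv_bound_antimono bound] order_refl norm_ge_zero)
  ultimately show ?thesis
    by (simp add: boundary_deriv_bound_def)
qed

end
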